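(* There exists a constant $c_1>0$ such that for all sufficiently large $n$ with $t\le c_1 n$ and for all $k$ with $30\, x\log n\le k\le c_1 n$, the probability that the reverse reachable set of $B$ has exactly $k$ vertices is at most $\frac{1}{n^2}$.
   Context: Random graph model: $V$ is a set of $n$ vertices, $B\subseteq V$ a target set with $|B|=t$, each $v\in V$ has a prescribed out-degree $d_v$ with $2\le d_{\min}\le d_v\le d_{\max}$ (constants independent of $n$), and for each $v$ independently its out-neighbour set is chosen uniformly at random among all $d_v$-element subsets of $V$. $x$ is the number of distinct values among the $d_v$. The reverse reachable set of $B$ is the set of vertices having a directed path to a vertex of $B$. $\log$ is the natural logarithm. *)

theory Defs
  imports "HOL-Probability.Probability"
begin

text \<open>Vertex set V = {..<n}. A configuration assigns to each vertex v < n its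
  out-neighbour set, a d v - element subset of V (extensional outside V).\<close>
definition configs :: "nat \<Rightarrow> (nat \<Rightarrow> nat) \<Rightarrow> (nat \<Rightarrow> nat set) set" where
  "configs n d = (\<Pi>\<^sub>E v\<in>{..<n}. {S. S \<subseteq> {..<n} \<and> card S = d v})"

text \<open>The random digraph: independent uniform choices = uniform distribution
  on the product of the choice sets.\<close>
definition random_digraph :: "nat \<Rightarrow> (nat \<Rightarrow> nat) \<Rightarrow> (nat \<Rightarrow> nat set) pmf" where
  "random_digraph n d = pmf_of_set (configs n d)"

definition arc_rel :: "nat \<Rightarrow> (nat \<Rightarrow> nat set) \<Rightarrow> (nat \<times> nat) set" where
  "arc_rel n N = {(v, w). v < n \<and> w \<in> N v}"

definition rev_reach :: "nat \<Rightarrow> (nat \<Rightarrow> nat set) \<Rightarrow> nat set \<Rightarrow> nat set" where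
  "rev_reach n N B = {u. u < n \<and> (\<exists>b\<in>B. (u, b) \<in> (arc_rel n N)\<^sup>*)}"

end

theory Submission
  imports Defs
begin

text \<open>If the reverse reachable set \<open>R\<close> of \<open>B\<close> has \<open>k\<close> elements, then \<open>B \<subseteq> R\<close>, every vertex
  of \<open>R - B\<close> has an out-neighbour in \<open>R\<close> and no vertex outside \<open>R\<close> has one. For a fixed
  \<open>k\<close>-set \<open>S\<close> these independent events have probability \<open>1 - a\<^sub>v\<close> resp. \<open>a\<^sub>v\<close>, where
  \<open>a\<^sub>v = C(n-k,d\<^sub>v)/C(n,d\<^sub>v) \<le> (1-k/n)\<^sup>2\<close>. Summing over all \<open>S\<close> and comparing with the
  expansion of \<open>\<Prod>((1-a\<^sub>v)/2 + a\<^sub>v)\<close> bounds the probability by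
  \<open>2\<^sup>k((1+(1-k/n)\<^sup>2)/2)\<^sup>n\<^sup>-\<^sup>t \<le> exp((ln 2 - 0.98) k) \<le> n\<^sup>-\<^sup>2\<close> once \<open>k \<ge> 30 ln n\<close> and \<open>k, t \<le> n/100\<close>.\<close>

lemma binomial_mult_fact_eq_prod: "(m choose d) * fact d = (\<Prod>i<d. m - i)"
proof (cases "d \<le> m")
  case True
  have "real ((m choose d) * fact d) = (real m gchoose d) * fact d"
    by (simp add: binomial_gbinomial)
  also have "\<dots> = (\<Prod>i<d. real m - real i)"
    by (simp add: gbinomial_mult_fact' atLeast0LessThan)
  also have "\<dots> = real (\<Prod>i<d. m - i)"
    using True by simp
  finally show ?thesis by (simp only: of_nat_eq_iff)
next
  case False
  then have "(\<Prod>i<d. m - i) = 0" by (intro prod_zero) auto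
  moreover have "m choose d = 0" using False by simp
  ultimately show ?thesis by (simp only: mult_0)
qed

lemma binomial_diff_mult_power_le: "(m - k choose d) * m ^ d \<le> (m choose d) * (m - k) ^ d"
proof -
  have factor: "(m - k - i) * m \<le> (m - i) * (m - k)" for i
  proof (cases "i < m - k")
    case True
    then obtain j where "m = k + i + j" by (metis add.commute less_imp_add_positive less_diff_conv)
    then show ?thesis by (simp add: algebra_simps)
  qed simp
  have "(m - k choose d) * m ^ d * fact d = (\<Prod>i<d. m - k - i) * (\<Prod>i<d. m)"
    by (simp only: binomial_mult_fact_eq_prod[symmetric] prod_constant card_lessThan mult_ac)
  also have "\<dots> \<le> (\<Prod>i<d. m - i) * (\<Prod>i<d. m - k)"
    unfolding prod.distrib[symmetric] by (intro prod_mono conjI zero_le factor)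
  also have "\<dots> = (m choose d) * (m - k) ^ d * fact d"
    by (simp only: binomial_mult_fact_eq_prod[symmetric] prod_constant card_lessThan mult_ac)
  finally show ?thesis by simp
qed

text \<open>The probability that a uniformly random \<open>d\<close>-subset of an \<open>n\<close>-set misses a fixed
  \<open>k\<close>-subset (and \<open>0\<close> if \<open>d > n\<close>).\<close>
definition avoid_prob :: "nat \<Rightarrow> nat \<Rightarrow> nat \<Rightarrow> real" where
  "avoid_prob n k d = real (n - k choose d) / real (n choose d)"

lemma avoid_prob_nonneg: "0 \<le> avoid_prob n k d"
  by (simp add: avoid_prob_def)

lemma avoid_prob_le_1: "avoid_prob n k d \<le> 1"
  using binomial_right_mono[of "n - k" n d]
  by (cases "n choose d = 0") (auto simp: avoid_prob_def divide_le_eq_1)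

lemma avoid_prob_le_power:
  assumes "0 < n" "k \<le> n"
  shows "avoid_prob n k d \<le> (1 - real k / real n) ^ d"
proof (cases "d \<le> n")
  case True
  have "real (n - k choose d) * real n ^ d \<le> real (n choose d) * real (n - k) ^ d"
    using binomial_diff_mult_power_le[of n k d] by (simp flip: of_nat_mult of_nat_power)
  then have "avoid_prob n k d \<le> (real (n - k) / real n) ^ d"
    using True by (simp add: avoid_prob_def divide_simps mult.commute)
  also have "real (n - k) / real n = 1 - real k / real n"
    using assms by (simp add: of_nat_diff field_simps)
  finally show ?thesis .
next
  case False
  have "0 \<le> 1 - real k / real n" using assms by simp
  moreover have "n choose d = 0" using False by simp
  ultimately show ?thesis by (simp only: avoid_prob_def of_nat_0 div_by_0 zero_le_power)
qed

lemma card_subsets_disjoint: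
  assumes "finite U" "S \<subseteq> U"
  shows "card {T. T \<subseteq> U \<and> card T = d \<and> T \<inter> S = {}} = (card U - card S) choose d"
proof -
  have "{T. T \<subseteq> U \<and> card T = d \<and> T \<inter> S = {}} = {T. T \<subseteq> U - S \<and> card T = d}"
    by blast
  then show ?thesis
    using assms n_subsets[of "U - S" d] by (simp add: card_Diff_subset finite_subset)
qed

lemma measure_pmf_of_set_PiE:
  assumes "finite I" "\<And>i. i \<in> I \<Longrightarrow> finite (A i) \<and> A i \<noteq> {}"
  shows "measure_pmf.prob (pmf_of_set (PiE I A)) (PiE I F) = (\<Prod>i\<in>I. card (A i \<inter> F i) / card (A i))"
proof -
  have "PiE I A \<noteq> {}" "finite (PiE I A)"
    using assms by (auto simp: PiE_eq_empty_iff intro!: finite_PiE)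
  then show ?thesis
    using assms by (simp add: measure_pmf_of_set PiE_Int card_PiE prod_dividef)
qed

lemma finite_configs: "finite (configs n d)"
  unfolding configs_def by (intro finite_PiE) (auto intro: finite_subset[of _ "Pow {..<n}"])

lemma configs_nonempty:
  assumes "\<And>v. v < n \<Longrightarrow> d v \<le> n"
  shows "configs n d \<noteq> {}"
proof -
  have "{..<d v} \<in> {S. S \<subseteq> {..<n} \<and> card S = d v}" if "v < n" for v
    using assms[OF that] by auto
  then show ?thesis unfolding configs_def PiE_eq_empty_iff by blast
qed

lemma subset_rev_reach: "B \<subseteq> {..<n} \<Longrightarrow> B \<subseteq> rev_reach n N B"
  by (auto simp: rev_reach_def)

lemma rev_reach_subset: "rev_reach n N B \<subseteq> {..<n}"
  by (auto simp: rev_reach_def)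

lemma rev_reach_out_neighbour:
  assumes "v \<in> rev_reach n N B - B" "N v \<subseteq> {..<n}"
  shows "N v \<inter> rev_reach n N B \<noteq> {}"
proof -
  obtain b where b: "b \<in> B" "(v, b) \<in> (arc_rel n N)\<^sup>*"
    using assms(1) by (auto simp: rev_reach_def)
  then obtain w where w: "(v, w) \<in> arc_rel n N" "(w, b) \<in> (arc_rel n N)\<^sup>*"
    using assms(1) by (metis DiffD2 converse_rtranclE)
  then have "w \<in> N v \<inter> rev_reach n N B"
    using assms(2) b(1) by (auto simp: arc_rel_def rev_reach_def)
  then show ?thesis by blast
qed

lemma rev_reach_closed:
  assumes "v < n" "v \<notin> rev_reach n N B"
  shows "N v \<inter> rev_reach n N B = {}"
proof (rule ccontr)
  assume "N v \<inter> rev_reach n N B \<noteq> {}"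
  then obtain w b where "w \<in> N v" "b \<in> B" "(w, b) \<in> (arc_rel n N)\<^sup>*"
    by (auto simp: rev_reach_def)
  then have "(v, b) \<in> (arc_rel n N)\<^sup>*"
    using assms(1) by (auto simp: arc_rel_def intro: converse_rtrancl_into_rtrancl)
  then show False using assms \<open>b \<in> B\<close> by (auto simp: rev_reach_def)
qed

definition rev_reach_constraint :: "nat set \<Rightarrow> nat set \<Rightarrow> nat \<Rightarrow> nat set set" where
  "rev_reach_constraint B S v = {T. (v \<in> S - B \<longrightarrow> T \<inter> S \<noteq> {}) \<and> (v \<notin> S \<longrightarrow> T \<inter> S = {})}"

lemma rev_reach_in_constraint:
  assumes "N \<in> configs n d"
  shows "N \<in> PiE {..<n} (rev_reach_constraint B (rev_reach n N B))"
proof -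
  have "N v \<in> rev_reach_constraint B (rev_reach n N B) v" if "v < n" for v
  proof -
    have "N v \<subseteq> {..<n}" using assms that by (auto simp: configs_def)
    then show ?thesis
      using that rev_reach_out_neighbour rev_reach_closed by (auto simp: rev_reach_constraint_def)
  qed
  then show ?thesis using assms by (auto simp: configs_def PiE_iff)
qed

lemma card_rev_reach_constraint:
  assumes U: "finite U" and BS: "B \<subseteq> S" and SU: "S \<subseteq> U"
  shows "card ({T. T \<subseteq> U \<and> card T = d} \<inter> rev_reach_constraint B S v)
    = (if v \<in> B then card U choose d
       else if v \<in> S then (card U choose d) - (card U - card S choose d)
       else card U - card S choose d)"
proof -
  define A where "A = {T. T \<subseteq> U \<and> card T = d}"
  define Z where "Z = {T. T \<subseteq> U \<and> card T = d \<and> T \<inter> S = {}}"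
  have "finite A" using U by (simp add: A_def finite_subset[of _ "Pow U"])
  have card_A: "card A = card U choose d" using n_subsets[OF U] by (simp add: A_def)
  have card_Z: "card Z = card U - card S choose d"
    using card_subsets_disjoint[OF U SU] by (simp add: Z_def)
  consider "v \<in> B" | "v \<in> S - B" | "v \<notin> S" by blast
  then show ?thesis
  proof cases
    case 1
    then have "A \<inter> rev_reach_constraint B S v = A"
      using BS by (auto simp: rev_reach_constraint_def)
    then show ?thesis using 1 card_A by (simp add: A_def)
  next
    case 2
    then have "A \<inter> rev_reach_constraint B S v = A - Z"
      by (auto simp: rev_reach_constraint_def A_def Z_def)
    moreover have "Z \<subseteq> A" by (auto simp: Z_def A_def)
    ultimately show ?thesis
      using 2 card_A card_Z \<open>finite A\<close> by (simp add: A_def card_Diff_subset finite_subset)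
  next
    case 3
    then have "A \<inter> rev_reach_constraint B S v = Z"
      by (auto simp: rev_reach_constraint_def A_def Z_def)
    then show ?thesis using 3 card_Z BS by (auto simp: A_def)
  qed
qed

lemma prob_rev_reach_constraint:
  assumes dn: "\<And>v. v < n \<Longrightarrow> d v \<le> n" and BS: "B \<subseteq> S" and SU: "S \<subseteq> {..<n}"
  shows "measure_pmf.prob (random_digraph n d) (PiE {..<n} (rev_reach_constraint B S))
    = (\<Prod>v\<in>S - B. 1 - avoid_prob n (card S) (d v)) * (\<Prod>v\<in>{..<n} - S. avoid_prob n (card S) (d v))"
proof -
  define A where "A = (\<lambda>v. {T. T \<subseteq> {..<n} \<and> card T = d v})"
  define r where "r v = real (card (A v \<inter> rev_reach_constraint B S v)) / real (card (A v))" for v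
  have cardA: "card (A v) = n choose d v" for v
    using n_subsets[of "{..<n}" "d v"] by (simp add: A_def)
  have A: "finite (A v) \<and> A v \<noteq> {}" if "v < n" for v
  proof -
    have "finite (A v)" by (simp add: A_def finite_subset[of _ "Pow {..<n}"])
    moreover have "card (A v) \<noteq> 0" using cardA[of v] dn[OF that] by simp
    ultimately show ?thesis by auto
  qed
  have r: "r v = (if v \<in> B then 1 else if v \<in> S then 1 - avoid_prob n (card S) (d v)
      else avoid_prob n (card S) (d v))" if "v < n" for v
    using card_rev_reach_constraint[OF finite_lessThan BS SU, of "d v" v] cardA[of v] dn[OF that]
      binomial_right_mono[of "n - card S" n "d v"]
    by (simp add: r_def A_def avoid_prob_def of_nat_diff diff_divide_distrib)
  have finS: "finite S" using SU finite_subset by blast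
  have "(\<Prod>v<n. r v) = (\<Prod>v\<in>{..<n} - S. r v) * (\<Prod>v\<in>S - B. r v) * (\<Prod>v\<in>B. r v)"
    using prod.subset_diff[OF SU finite_lessThan, of r] prod.subset_diff[OF BS finS, of r]
    by (simp only: mult.assoc)
  also have "\<dots> = (\<Prod>v\<in>S - B. 1 - avoid_prob n (card S) (d v)) * (\<Prod>v\<in>{..<n} - S. avoid_prob n (card S) (d v))"
  proof -
    have "(\<Prod>v\<in>{..<n} - S. r v) = (\<Prod>v\<in>{..<n} - S. avoid_prob n (card S) (d v))"
      using r BS by (intro prod.cong) auto
    moreover have "(\<Prod>v\<in>S - B. r v) = (\<Prod>v\<in>S - B. 1 - avoid_prob n (card S) (d v))"
      using r SU by (intro prod.cong) auto
    moreover have "(\<Prod>v\<in>B. r v) = 1"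
      using r BS SU by (intro prod.neutral) auto
    ultimately show ?thesis by simp
  qed
  finally show ?thesis
    using measure_pmf_of_set_PiE[of "{..<n}" A] A
    by (simp add: random_digraph_def configs_def A_def r_def)
qed

lemma prob_card_rev_reach_le_sum:
  assumes dn: "\<And>v. v < n \<Longrightarrow> d v \<le> n" and B: "B \<subseteq> {..<n}"
  shows "measure_pmf.prob (random_digraph n d) {N. card (rev_reach n N B) = k}
    \<le> (\<Sum>S | B \<subseteq> S \<and> S \<subseteq> {..<n} \<and> card S = k.
          (\<Prod>v\<in>S - B. 1 - avoid_prob n k (d v)) * (\<Prod>v\<in>{..<n} - S. avoid_prob n k (d v)))"
proof -
  let ?p = "measure_pmf.prob (random_digraph n d)"
  let ?E = "{N. card (rev_reach n N B) = k}"
  let ?Sk = "{S. B \<subseteq> S \<and> S \<subseteq> {..<n} \<and> card S = k}"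
  have cover: "?E \<inter> configs n d \<subseteq> (\<Union>S\<in>?Sk. PiE {..<n} (rev_reach_constraint B S))"
  proof
    fix N assume N: "N \<in> ?E \<inter> configs n d"
    show "N \<in> (\<Union>S\<in>?Sk. PiE {..<n} (rev_reach_constraint B S))"
    proof (rule UN_I)
      show "rev_reach n N B \<in> ?Sk"
        using N subset_rev_reach[OF B] rev_reach_subset by simp
      show "N \<in> PiE {..<n} (rev_reach_constraint B (rev_reach n N B))"
        using N by (intro rev_reach_in_constraint[of N n d]) simp
    qed
  qed
  have "finite ?Sk" by (auto intro: finite_subset[of _ "Pow {..<n}"])
  have "?p ?E = ?p (?E \<inter> configs n d)"
    using measure_Int_set_pmf[of "random_digraph n d" ?E]
      set_pmf_of_set[OF configs_nonempty[OF dn] finite_configs]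
    by (simp add: random_digraph_def)
  also have "\<dots> \<le> ?p (\<Union>S\<in>?Sk. PiE {..<n} (rev_reach_constraint B S))"
    using cover by (rule measure_pmf.finite_measure_mono) simp
  also have "\<dots> \<le> (\<Sum>S\<in>?Sk. ?p (PiE {..<n} (rev_reach_constraint B S)))"
    using \<open>finite ?Sk\<close> by (rule measure_pmf.finite_measure_subadditive_finite) simp
  also have "\<dots> = (\<Sum>S\<in>?Sk. (\<Prod>v\<in>S - B. 1 - avoid_prob n k (d v)) * (\<Prod>v\<in>{..<n} - S. avoid_prob n k (d v)))"
  proof (rule sum.cong[OF refl])
    fix S assume "S \<in> ?Sk"
    then show "?p (PiE {..<n} (rev_reach_constraint B S))
        = (\<Prod>v\<in>S - B. 1 - avoid_prob n k (d v)) * (\<Prod>v\<in>{..<n} - S. avoid_prob n k (d v))"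
      using prob_rev_reach_constraint[OF dn, where B = B and S = S] by simp
  qed
  finally show ?thesis .
qed

lemma sum_subsets_prod_le:
  fixes a :: "'a \<Rightarrow> real"
  assumes W: "finite W" and a: "\<And>v. v \<in> W \<Longrightarrow> 0 \<le> a v \<and> a v \<le> 1"
  shows "(\<Sum>T | T \<subseteq> W \<and> card T \<le> k. (\<Prod>v\<in>T. 1 - a v) * (\<Prod>v\<in>W - T. a v))
    \<le> 2 ^ k * (\<Prod>v\<in>W. (1 + a v) / 2)"
proof -
  \<comment> \<open>each term is \<open>2\<^bsup>card T\<^esup>\<close> times a term of the expansion of \<open>\<Prod>v\<in>W. (1 - a v) / 2 + a v\<close>\<close>
  define h where "h T = (\<Prod>v\<in>T. (1 - a v) / 2) * (\<Prod>v\<in>W - T. a v)" for T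
  have h_nonneg: "0 \<le> h T" if "T \<subseteq> W" for T
    using that a unfolding h_def by (intro mult_nonneg_nonneg prod_nonneg) auto
  have "(\<Prod>v\<in>T. 1 - a v) * (\<Prod>v\<in>W - T. a v) = 2 ^ card T * h T" if "T \<subseteq> W" for T
    using finite_subset[OF that W] by (simp add: h_def prod_dividef)
  then have "(\<Sum>T | T \<subseteq> W \<and> card T \<le> k. (\<Prod>v\<in>T. 1 - a v) * (\<Prod>v\<in>W - T. a v))
      \<le> (\<Sum>T | T \<subseteq> W \<and> card T \<le> k. 2 ^ k * h T)"
    using h_nonneg by (intro sum_mono) (auto intro!: mult_right_mono power_increasing)
  also have "\<dots> \<le> (\<Sum>T\<in>Pow W. 2 ^ k * h T)"
    using W h_nonneg by (intro sum_mono2) auto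
  also have "\<dots> = 2 ^ k * (\<Prod>v\<in>W. (1 - a v) / 2 + a v)"
    by (simp add: h_def prod_add[OF W] sum_distrib_left)
  also have "\<dots> = 2 ^ k * (\<Prod>v\<in>W. (1 + a v) / 2)"
    by (simp add: field_simps)
  finally show ?thesis .
qed

lemma sum_supersets_prod_le:
  fixes a :: "'a \<Rightarrow> real"
  assumes U: "finite U" and B: "B \<subseteq> U" and a: "\<And>v. v \<in> U - B \<Longrightarrow> 0 \<le> a v \<and> a v \<le> 1"
  shows "(\<Sum>S | B \<subseteq> S \<and> S \<subseteq> U \<and> card S = k. (\<Prod>v\<in>S - B. 1 - a v) * (\<Prod>v\<in>U - S. a v))
    \<le> 2 ^ k * (\<Prod>v\<in>U - B. (1 + a v) / 2)"
proof -
  define Sk where "Sk = {S. B \<subseteq> S \<and> S \<subseteq> U \<and> card S = k}"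
  define g where "g T = (\<Prod>v\<in>T. 1 - a v) * (\<Prod>v\<in>(U - B) - T. a v)" for T
  have g_nonneg: "0 \<le> g T" if "T \<subseteq> U - B" for T
    using that a unfolding g_def by (intro mult_nonneg_nonneg prod_nonneg) auto
  have "(\<Sum>S\<in>Sk. (\<Prod>v\<in>S - B. 1 - a v) * (\<Prod>v\<in>U - S. a v)) = (\<Sum>S\<in>Sk. g (S - B))"
  proof (rule sum.cong[OF refl])
    fix S assume "S \<in> Sk"
    then have "U - S = (U - B) - (S - B)" by (auto simp: Sk_def)
    then show "(\<Prod>v\<in>S - B. 1 - a v) * (\<Prod>v\<in>U - S. a v) = g (S - B)" by (simp add: g_def)
  qed
  also have "\<dots> = (\<Sum>T\<in>(\<lambda>S. S - B) ` Sk. g T)"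
    by (rule sum.reindex_cong[symmetric, OF _ refl refl]) (auto simp: Sk_def inj_on_def)
  also have "\<dots> \<le> (\<Sum>T | T \<subseteq> U - B \<and> card T \<le> k. g T)"
  proof (rule sum_mono2)
    show "(\<lambda>S. S - B) ` Sk \<subseteq> {T. T \<subseteq> U - B \<and> card T \<le> k}"
      using U by (auto simp: Sk_def intro!: card_mono finite_subset[OF _ U])
  qed (use U g_nonneg in auto)
  also have "\<dots> \<le> 2 ^ k * (\<Prod>v\<in>U - B. (1 + a v) / 2)"
    unfolding g_def using U a by (intro sum_subsets_prod_le) auto
  finally show ?thesis by (simp add: Sk_def)
qed

lemma ln_2_le: "ln (2::real) \<le> 5 / 6"
proof -
  have "ln (2::real) = ln (4 / 3 * (3 / 2))"
    by simp
  also have "\<dots> = ln (4 / 3) + ln (3 / 2)"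
    by (rule ln_mult_pos) auto
  also have "\<dots> \<le> (4 / 3 - 1) + (3 / 2 - 1)"
    by (intro add_mono ln_le_minus_one) auto
  finally show ?thesis by simp
qed

lemma two_pow_mult_power_le:
  fixes n k t :: nat
  assumes n: "0 < n" and k: "real k \<le> real n / 100" and t: "real t \<le> real n / 100"
    and k_log: "30 * ln (real n) \<le> real k"
  shows "2 ^ k * ((1 + (1 - real k / real n)\<^sup>2) / 2) ^ (n - t) \<le> 1 / (real n)\<^sup>2"
proof -
  define u where "u = real k / real n"
  have u: "0 \<le> u" "u \<le> 1 / 100" and k_eq: "real k = u * real n"
    using n k by (auto simp: u_def field_simps)
  have "(1 + (1 - u)\<^sup>2) / 2 = 1 + (- u + u\<^sup>2 / 2)"
    by (simp add: power2_eq_square field_simps)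
  also have "\<dots> \<le> exp (- u + u\<^sup>2 / 2)"
    by (rule exp_ge_add_one_self)
  also have "\<dots> \<le> exp (- (99 / 100) * u)"
  proof -
    have "u * u \<le> u * (1 / 100)" using u by (intro mult_left_mono) auto
    then show ?thesis using u by (simp add: power2_eq_square)
  qed
  finally have base: "(1 + (1 - u)\<^sup>2) / 2 \<le> exp (- (99 / 100) * u)" .
  have nt: "(99 / 100) * real n \<le> real (n - t)"
    using t by (simp add: of_nat_diff)
  have "((1 + (1 - u)\<^sup>2) / 2) ^ (n - t) \<le> exp (- (99 / 100) * u) ^ (n - t)"
    using base by (intro power_mono) (auto intro: add_nonneg_nonneg)
  also have "\<dots> = exp (- (99 / 100) * u * real (n - t))"
    by (simp add: exp_of_nat_mult[symmetric] mult.commute)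
  also have "\<dots> \<le> exp (- (9801 / 10000) * real k)"
    using mult_left_mono[OF nt, of "(99 / 100) * u"] u by (simp add: k_eq)
  finally have power: "((1 + (1 - u)\<^sup>2) / 2) ^ (n - t) \<le> exp (- (9801 / 10000) * real k)" .
  have "(2::real) ^ k = exp (real k * ln 2)"
    by (simp add: exp_of_nat_mult)
  also have "\<dots> \<le> exp (real k * (5 / 6))"
    using mult_left_mono[OF ln_2_le, of "real k"] by simp
  finally have two_pow: "(2::real) ^ k \<le> exp (real k * (5 / 6))" .
  have "2 ^ k * ((1 + (1 - u)\<^sup>2) / 2) ^ (n - t) \<le> exp (real k * (5 / 6)) * exp (- (9801 / 10000) * real k)"
    using two_pow power by (intro mult_mono) auto
  also have "\<dots> \<le> exp (- (2 * ln (real n)))"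
    using k_log n by (simp flip: exp_add)
  also have "\<dots> = 1 / (real n)\<^sup>2"
    using n exp_of_nat_mult[of 2 "ln (real n)"] by (simp add: exp_minus inverse_eq_divide)
  finally show ?thesis by (simp add: u_def)
qed

lemma prob_card_rev_reach_le:
  assumes d: "\<And>v. v < n \<Longrightarrow> 2 \<le> d v \<and> d v \<le> n" and B: "B \<subseteq> {..<n}" and "0 < n" "k \<le> n"
  shows "measure_pmf.prob (random_digraph n d) {N. card (rev_reach n N B) = k}
    \<le> 2 ^ k * ((1 + (1 - real k / real n)\<^sup>2) / 2) ^ (n - card B)"
proof -
  have avoid_le: "avoid_prob n k (d v) \<le> (1 - real k / real n)\<^sup>2" if "v < n" for v
  proof -
    have "0 \<le> 1 - real k / real n" "1 - real k / real n \<le> 1" using assms by auto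
    then have "(1 - real k / real n) ^ d v \<le> (1 - real k / real n)\<^sup>2"
      using d[OF that] by (intro power_decreasing) auto
    then show ?thesis by (rule order_trans[OF avoid_prob_le_power[OF assms(3,4)]])
  qed
  have "measure_pmf.prob (random_digraph n d) {N. card (rev_reach n N B) = k}
      \<le> (\<Sum>S | B \<subseteq> S \<and> S \<subseteq> {..<n} \<and> card S = k.
          (\<Prod>v\<in>S - B. 1 - avoid_prob n k (d v)) * (\<Prod>v\<in>{..<n} - S. avoid_prob n k (d v)))"
    using d B by (intro prob_card_rev_reach_le_sum) auto
  also have "\<dots> \<le> 2 ^ k * (\<Prod>v\<in>{..<n} - B. (1 + avoid_prob n k (d v)) / 2)"
    using B by (intro sum_supersets_prod_le) (auto simp: avoid_prob_nonneg avoid_prob_le_1)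
  also have "\<dots> \<le> 2 ^ k * (\<Prod>v\<in>{..<n} - B. (1 + (1 - real k / real n)\<^sup>2) / 2)"
    using avoid_le by (intro mult_left_mono prod_mono) (auto simp: avoid_prob_nonneg)
  also have "\<dots> = 2 ^ k * ((1 + (1 - real k / real n)\<^sup>2) / 2) ^ (n - card B)"
    using B by (simp add: card_Diff_subset finite_subset)
  finally show ?thesis .
qed

theorem lemma10:
  fixes dmin dmax :: nat
  assumes "2 \<le> dmin" and "dmin \<le> dmax"
  shows "\<exists>c1::real. c1 > 0 \<and> (\<exists>N0::nat. \<forall>n \<ge> N0. \<forall>(d :: nat \<Rightarrow> nat) (B :: nat set) (t :: nat) (k :: nat).
           (\<forall>v<n. dmin \<le> d v \<and> d v \<le> dmax) \<longrightarrow>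
           B \<subseteq> {..<n} \<longrightarrow> card B = t \<longrightarrow> real t \<le> c1 * real n \<longrightarrow>
           30 * real (card (d ` {..<n})) * ln (real n) \<le> real k \<longrightarrow> real k \<le> c1 * real n \<longrightarrow>
           measure_pmf.prob (random_digraph n d) {N. card (rev_reach n N B) = k} \<le> 1 / (real n)^2)"
proof (intro exI[of _ "1 / 100"] conjI exI[of _ dmax] allI impI)
  fix n d B t k
  assume n: "dmax \<le> n" and d: "\<forall>v<n. dmin \<le> d v \<and> d v \<le> dmax"
    and B: "B \<subseteq> {..<n}" "card B = t" and t: "real t \<le> 1 / 100 * real n"
    and k_log: "30 * real (card (d ` {..<n})) * ln (real n) \<le> real k"
    and k: "real k \<le> 1 / 100 * real n"
  have "0 < n" using n assms by simp
  have d': "2 \<le> d v \<and> d v \<le> n" if "v < n" for v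
    using d that assms n by (meson order_trans)
  have "k \<le> n" using k by simp
  \<comment> \<open>of the number of distinct degrees only its positivity is needed\<close>
  have "1 \<le> real (card (d ` {..<n}))"
    using \<open>0 < n\<close> by (simp add: Suc_le_eq card_gt_0_iff lessThan_empty_iff)
  then have "30 * ln (real n) \<le> real k"
    using k_log mult_right_mono[of 1 "real (card (d ` {..<n}))" "30 * ln (real n)"] \<open>0 < n\<close> by simp
  have "measure_pmf.prob (random_digraph n d) {N. card (rev_reach n N B) = k}
      \<le> 2 ^ k * ((1 + (1 - real k / real n)\<^sup>2) / 2) ^ (n - t)"
    using prob_card_rev_reach_le[OF d' B(1) \<open>0 < n\<close> \<open>k \<le> n\<close>] B(2) by simp
  also have "\<dots> \<le> 1 / (real n)\<^sup>2"
    using two_pow_mult_power_le[OF \<open>0 < n\<close>] k t \<open>30 * ln (real n) \<le> real k\<close> by simp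
  finally show "measure_pmf.prob (random_digraph n d) {N. card (rev_reach n N B) = k} \<le> 1 / (real n)^2" .
qed (simp)

end
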